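(* Let $G=(V,E)$ be a finite graph, $C$ a finite set, and $\pi(\sigma)=\frac1Z\prod_{(v,w)\in E}\alpha_{vw}(\sigma(v),\sigma(w))$ a probability distribution on $C^V$ (with $\alpha_{vw}\ge 0$ and $Z$ a normalizing constant), with support $\mathcal{S}\subseteq C^V$. Let $\mathcal{G}=(\mathcal{V},\mathcal{E})$ be the transition graph with $\mathcal{V}=\mathcal{S}$ and $(\sigma,\sigma')\in\mathcal{E}$ iff $\sigma,\sigma'$ differ in at most one node of $V$. For $\sigma\in\mathcal{S}$, $v\in V$, $a\in C$ let $\sigma_v^a$ be the configuration equal to $\sigma$ off $v$ and equal to $a$ at $v$, and let $$K(\sigma,\sigma_v^a)=\frac{\prod_{w:(v,w)\in E}\alpha_{vw}(a,\sigma(w))}{\sum_{a'\in C}\prod_{w:(v,w)\in E}\alpha_{vw}(a',\sigma(w))}.$$ For a probability distribution $\rho$ on $V$ (the rates), let $P_\rho$ be the Markov chain on $\mathcal{S}$ that at each step picks $v\in V$ with probability $\rho(v)$ and moves from $\sigma$ to $\sigma_v^a$ with probability $K(\sigma,\sigma_v^a)$; let $U$ denote the uniform distribution on $V$. Let $\Gamma$ be a set of paths $\gamma_{\sigma\sigma'}$ in $\mathcal{G}$, one for each pair $\sigma,\sigma'\in\mathcal{S}$, and for an edge $e$ and a chain $P$ set $$\frac{W(e)}{Q_P(e)},\qquad W(e)=\sum_{\gamma_{\sigma\sigma'}\ni e}\pi(\sigma)\pi(\sigma')|\gamma_{\sigma\sigma'}|,\qquad Q_P(\sigma,\tau)=\pi(\sigma)P(\sigma,\tau),$$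 where $|\gamma|$ is the number of edges of $\gamma$. Suppose that for each $v\in V$ there is a number $B_v>0$ such that $W(e)/Q_{P_U}(e)\le B_v$ for every edge $e$ of $\mathcal{G}$ of the form $(\sigma,\sigma_v^a)$ with $\sigma_v^a\ne\sigma$. Then $$\tau_2(P_U)\le\max_{v\in V}B_v,\qquad\text{and}\qquad \tau_2(P_{\tilde\rho})\le |V|^{-1}\sum_{v\in V}B_v,$$ where $\tilde\rho(v)=B_v/\sum_{u\in V}B_u$.
   Context: For a $\pi$-reversible transition matrix $P$, $\lambda_2(P)$ is its second largest eigenvalue and $\tau_2(P)=1/(1-\lambda_2(P))$ is its relaxation time. The chain $P_\rho$ is $\pi$-reversible; explicitly, for $\tau\ne\sigma$ differing from $\sigma$ only at node $v$, $P_\rho(\sigma,\tau)=\rho(v)K(\sigma,\tau)$, and the remaining mass stays at $\sigma$. *)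

theory Defs
  imports Complex_Main
begin

(* Nodes: finite type 'v (V = UNIV); colours: finite type 'c (C = UNIV).
   Configurations: functions 'v => 'c.  E is a set of ordered pairs of nodes. *)

definition weight :: "('v \<times> 'v) set \<Rightarrow> ('v \<Rightarrow> 'v \<Rightarrow> 'c \<Rightarrow> 'c \<Rightarrow> real) \<Rightarrow> ('v \<Rightarrow> 'c) \<Rightarrow> real" where
  "weight E \<alpha> \<sigma> = (\<Prod>(v, w)\<in>E. \<alpha> v w (\<sigma> v) (\<sigma> w))"

definition partition_fn :: "('v::finite \<times> 'v) set \<Rightarrow> ('v \<Rightarrow> 'v \<Rightarrow> 'c::finite \<Rightarrow> 'c \<Rightarrow> real) \<Rightarrow> real" where
  "partition_fn E \<alpha> = (\<Sum>\<sigma>\<in>(UNIV :: ('v \<Rightarrow> 'c) set). weight E \<alpha> \<sigma>)"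

definition gibbs :: "('v::finite \<times> 'v) set \<Rightarrow> ('v \<Rightarrow> 'v \<Rightarrow> 'c::finite \<Rightarrow> 'c \<Rightarrow> real) \<Rightarrow> ('v \<Rightarrow> 'c) \<Rightarrow> real" where
  "gibbs E \<alpha> \<sigma> = weight E \<alpha> \<sigma> / partition_fn E \<alpha>"

definition supp :: "('v::finite \<times> 'v) set \<Rightarrow> ('v \<Rightarrow> 'v \<Rightarrow> 'c::finite \<Rightarrow> 'c \<Rightarrow> real) \<Rightarrow> ('v \<Rightarrow> 'c) set" where
  "supp E \<alpha> = {\<sigma>. gibbs E \<alpha> \<sigma> > 0}"

definition cond_weight :: "('v \<times> 'v) set \<Rightarrow> ('v \<Rightarrow> 'v \<Rightarrow> 'c \<Rightarrow> 'c \<Rightarrow> real) \<Rightarrow> 'v \<Rightarrow> 'c \<Rightarrow> ('v \<Rightarrow> 'c) \<Rightarrow> real" where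
  "cond_weight E \<alpha> v a \<sigma> =
     (\<Prod>(x, y)\<in>{e\<in>E. fst e = v \<or> snd e = v}. \<alpha> x y ((\<sigma>(v := a)) x) ((\<sigma>(v := a)) y))"

definition heatbath :: "('v \<times> 'v) set \<Rightarrow> ('v \<Rightarrow> 'v \<Rightarrow> 'c::finite \<Rightarrow> 'c \<Rightarrow> real) \<Rightarrow> ('v \<Rightarrow> 'c) \<Rightarrow> 'v \<Rightarrow> 'c \<Rightarrow> real" where
  "heatbath E \<alpha> \<sigma> v a = cond_weight E \<alpha> v a \<sigma> / (\<Sum>a'\<in>UNIV. cond_weight E \<alpha> v a' \<sigma>)"

definition glauber_off :: "('v::finite \<times> 'v) set \<Rightarrow> ('v \<Rightarrow> 'v \<Rightarrow> 'c::finite \<Rightarrow> 'c \<Rightarrow> real) \<Rightarrow> ('v \<Rightarrow> real) \<Rightarrow> ('v \<Rightarrow> 'c) \<Rightarrow> ('v \<Rightarrow> 'c) \<Rightarrow> real" where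
  "glauber_off E \<alpha> \<rho> \<sigma> \<tau> =
     (if card {v. \<tau> v \<noteq> \<sigma> v} = 1
      then (let v = (THE v. \<tau> v \<noteq> \<sigma> v) in \<rho> v * heatbath E \<alpha> \<sigma> v (\<tau> v))
      else 0)"

definition glauber :: "('v::finite \<times> 'v) set \<Rightarrow> ('v \<Rightarrow> 'v \<Rightarrow> 'c::finite \<Rightarrow> 'c \<Rightarrow> real) \<Rightarrow> ('v \<Rightarrow> real) \<Rightarrow> ('v \<Rightarrow> 'c) \<Rightarrow> ('v \<Rightarrow> 'c) \<Rightarrow> real" where
  "glauber E \<alpha> \<rho> \<sigma> \<tau> =
     (if \<tau> = \<sigma> then 1 - (\<Sum>\<tau>'\<in>UNIV - {\<sigma>}. glauber_off E \<alpha> \<rho> \<sigma> \<tau>')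
      else glauber_off E \<alpha> \<rho> \<sigma> \<tau>)"

definition uniform_rate :: "'v::finite \<Rightarrow> real" where
  "uniform_rate v = 1 / real (card (UNIV :: 'v set))"

definition is_eigenvector :: "'s set \<Rightarrow> ('s \<Rightarrow> 's \<Rightarrow> real) \<Rightarrow> real \<Rightarrow> ('s \<Rightarrow> real) \<Rightarrow> bool" where
  "is_eigenvector S P l f \<longleftrightarrow> (\<exists>\<sigma>\<in>S. f \<sigma> \<noteq> 0) \<and> (\<forall>\<sigma>\<in>S. (\<Sum>\<tau>\<in>S. P \<sigma> \<tau> * f \<tau>) = l * f \<sigma>)"

definition is_eigenvalue :: "'s set \<Rightarrow> ('s \<Rightarrow> 's \<Rightarrow> real) \<Rightarrow> real \<Rightarrow> bool" where
  "is_eigenvalue S P l \<longleftrightarrow> (\<exists>f. is_eigenvector S P l f)"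

definition lambda1 :: "'s set \<Rightarrow> ('s \<Rightarrow> 's \<Rightarrow> real) \<Rightarrow> real" where
  "lambda1 S P = Max {l. is_eigenvalue S P l}"

definition mult_ge2 :: "'s set \<Rightarrow> ('s \<Rightarrow> 's \<Rightarrow> real) \<Rightarrow> real \<Rightarrow> bool" where
  "mult_ge2 S P l \<longleftrightarrow> (\<exists>f g. is_eigenvector S P l f \<and> is_eigenvector S P l g \<and>
       (\<forall>a b. (\<forall>\<sigma>\<in>S. a * f \<sigma> + b * g \<sigma> = 0) \<longrightarrow> a = 0 \<and> b = 0))"

(* second largest eigenvalue, counted with multiplicity *)
definition lambda2 :: "'s set \<Rightarrow> ('s \<Rightarrow> 's \<Rightarrow> real) \<Rightarrow> real" where
  "lambda2 S P = (if mult_ge2 S P (lambda1 S P) then lambda1 S P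
                  else Max ({l. is_eigenvalue S P l} - {lambda1 S P}))"

definition tau2 :: "'s set \<Rightarrow> ('s \<Rightarrow> 's \<Rightarrow> real) \<Rightarrow> real" where
  "tau2 S P = 1 / (1 - lambda2 S P)"

definition trans_edge :: "('v \<Rightarrow> 'c) set \<Rightarrow> ('v \<Rightarrow> 'c) \<Rightarrow> ('v \<Rightarrow> 'c) \<Rightarrow> bool" where
  "trans_edge S \<sigma> \<tau> \<longleftrightarrow> \<sigma> \<in> S \<and> \<tau> \<in> S \<and> (\<exists>v. \<tau> = \<sigma>(v := \<tau> v))"

definition is_path :: "('v \<Rightarrow> 'c) set \<Rightarrow> ('v \<Rightarrow> 'c) \<Rightarrow> ('v \<Rightarrow> 'c) \<Rightarrow> ('v \<Rightarrow> 'c) list \<Rightarrow> bool" where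
  "is_path S \<sigma> \<sigma>' \<gamma> \<longleftrightarrow> \<gamma> \<noteq> [] \<and> hd \<gamma> = \<sigma> \<and> last \<gamma> = \<sigma>' \<and> distinct \<gamma> \<and> set \<gamma> \<subseteq> S \<and>
      (\<forall>i. Suc i < length \<gamma> \<longrightarrow> trans_edge S (\<gamma> ! i) (\<gamma> ! Suc i))"

definition path_edges :: "'a list \<Rightarrow> ('a \<times> 'a) set" where
  "path_edges \<gamma> = set (zip \<gamma> (tl \<gamma>))"

definition path_len :: "'a list \<Rightarrow> nat" where
  "path_len \<gamma> = length \<gamma> - 1"

definition congestion :: "('v::finite \<times> 'v) set \<Rightarrow> ('v \<Rightarrow> 'v \<Rightarrow> 'c::finite \<Rightarrow> 'c \<Rightarrow> real) \<Rightarrow>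
    (('v \<Rightarrow> 'c) \<Rightarrow> ('v \<Rightarrow> 'c) \<Rightarrow> ('v \<Rightarrow> 'c) list) \<Rightarrow> ('v \<Rightarrow> 'c) \<times> ('v \<Rightarrow> 'c) \<Rightarrow> real" where
  "congestion E \<alpha> \<Gamma> e =
     (\<Sum>p\<in>{p\<in>supp E \<alpha> \<times> supp E \<alpha>. e \<in> path_edges (\<Gamma> (fst p) (snd p))}.
        gibbs E \<alpha> (fst p) * gibbs E \<alpha> (snd p) * real (path_len (\<Gamma> (fst p) (snd p))))"

definition edge_flow :: "('v::finite \<times> 'v) set \<Rightarrow> ('v \<Rightarrow> 'v \<Rightarrow> 'c::finite \<Rightarrow> 'c \<Rightarrow> real) \<Rightarrow>
    (('v \<Rightarrow> 'c) \<Rightarrow> ('v \<Rightarrow> 'c) \<Rightarrow> real) \<Rightarrow> ('v \<Rightarrow> 'c) \<times> ('v \<Rightarrow> 'c) \<Rightarrow> real" where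
  "edge_flow E \<alpha> P e = gibbs E \<alpha> (fst e) * P (fst e) (snd e)"

end

theory Submission
  imports Defs "HOL-Analysis.Analysis"
begin

(* Gibbs sampling P\<^sub>\<rho> is reversible with respect to the Gibbs distribution \<pi>, so its eigenvalues are
   real and \<lambda>\<^sub>2 is the largest Rayleigh quotient <P f, f>\<^sub>\<pi> / <f, f>\<^sub>\<pi> over mean-zero f.  Hence a
   Poincare inequality <f, f>\<^sub>\<pi> \<le> C E(f) for mean-zero f, with E the Dirichlet form, gives
   \<tau>\<^sub>2 \<le> C.  Canonical paths prove it as soon as W(e) \<le> C Q(e) on every edge: expanding
   f \<sigma> - f \<sigma>' along the path \<Gamma> \<sigma> \<sigma>' and applying Cauchy-Schwarz bounds 2 <f, f>\<^sub>\<pi> by the sum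
   over edges e = (\<sigma>\<^sub>1, \<sigma>\<^sub>2) of W(e) (f \<sigma>\<^sub>1 - f \<sigma>\<^sub>2)\<^sup>2.  For a move at node v the flow of P\<^sub>\<rho> is
   \<rho>(v) \<pi>(\<sigma>) K(e), so the hypothesis on W(e) / Q\<^sub>U(e) gives W(e) \<le> C Q\<^sub>\<rho>(e) whenever
   B\<^sub>v / |V| \<le> C \<rho>(v): with C = max B for the uniform rates, and with C = \<Sum>B / |V| for the
   rates proportional to B. *)

section \<open>Reversible kernels on a finite state space\<close>

definition inner_pi :: "'s set \<Rightarrow> ('s \<Rightarrow> real) \<Rightarrow> ('s \<Rightarrow> real) \<Rightarrow> ('s \<Rightarrow> real) \<Rightarrow> real" where
  "inner_pi S p f g = (\<Sum>x\<in>S. p x * f x * g x)"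

definition kernel_apply :: "'s set \<Rightarrow> ('s \<Rightarrow> 's \<Rightarrow> real) \<Rightarrow> ('s \<Rightarrow> real) \<Rightarrow> 's \<Rightarrow> real" where
  "kernel_apply S P f x = (\<Sum>y\<in>S. P x y * f y)"

definition dirichlet_form :: "'s set \<Rightarrow> ('s \<Rightarrow> real) \<Rightarrow> ('s \<Rightarrow> 's \<Rightarrow> real) \<Rightarrow> ('s \<Rightarrow> real) \<Rightarrow> real" where
  "dirichlet_form S p P f = (\<Sum>x\<in>S. \<Sum>y\<in>S. p x * P x y * (f x - f y)\<^sup>2) / 2"

definition poincare_inequality :: "'s set \<Rightarrow> ('s \<Rightarrow> real) \<Rightarrow> ('s \<Rightarrow> 's \<Rightarrow> real) \<Rightarrow> real \<Rightarrow> bool" where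
  "poincare_inequality S p P C \<longleftrightarrow>
     (\<forall>f. inner_pi S p f (\<lambda>_. 1) = 0 \<longrightarrow> inner_pi S p f f \<le> C * dirichlet_form S p P f)"

lemma inner_pi_cong:
  "(\<And>x. x \<in> S \<Longrightarrow> f x = f' x) \<Longrightarrow> (\<And>x. x \<in> S \<Longrightarrow> g x = g' x) \<Longrightarrow>
    inner_pi S p f g = inner_pi S p f' g'"
  unfolding inner_pi_def by (intro sum.cong) auto

lemma inner_pi_commute: "inner_pi S p f g = inner_pi S p g f"
  unfolding inner_pi_def by (simp add: ac_simps)

lemma inner_pi_add_left: "inner_pi S p (\<lambda>x. f x + g x) h = inner_pi S p f h + inner_pi S p g h"
  unfolding inner_pi_def by (simp add: sum.distrib algebra_simps)

lemma inner_pi_add_right: "inner_pi S p h (\<lambda>x. f x + g x) = inner_pi S p h f + inner_pi S p h g"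
  unfolding inner_pi_def by (simp add: sum.distrib algebra_simps)

lemma inner_pi_diff_left: "inner_pi S p (\<lambda>x. f x - g x) h = inner_pi S p f h - inner_pi S p g h"
  unfolding inner_pi_def by (simp add: sum_subtractf left_diff_distrib right_diff_distrib)

lemma inner_pi_scale_left: "inner_pi S p (\<lambda>x. c * f x) g = c * inner_pi S p f g"
  unfolding inner_pi_def by (simp add: sum_distrib_left ac_simps)

lemma inner_pi_scale_right: "inner_pi S p g (\<lambda>x. c * f x) = c * inner_pi S p g f"
  unfolding inner_pi_def by (simp add: sum_distrib_left ac_simps)

lemma inner_pi_zero_right: "inner_pi S p f (\<lambda>_. 0) = 0"
  unfolding inner_pi_def by simp

lemma kernel_apply_cong: "(\<And>x. x \<in> S \<Longrightarrow> f x = g x) \<Longrightarrow> kernel_apply S P f = kernel_apply S P g"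
  unfolding kernel_apply_def by (intro ext sum.cong) auto

lemma kernel_apply_add:
  "kernel_apply S P (\<lambda>x. f x + g x) = (\<lambda>x. kernel_apply S P f x + kernel_apply S P g x)"
  unfolding kernel_apply_def by (simp add: sum.distrib algebra_simps)

lemma kernel_apply_scale: "kernel_apply S P (\<lambda>x. c * f x) = (\<lambda>x. c * kernel_apply S P f x)"
  unfolding kernel_apply_def by (simp add: sum_distrib_left ac_simps)

lemma is_eigenvector_iff:
  "is_eigenvector S P l f \<longleftrightarrow> (\<exists>x\<in>S. f x \<noteq> 0) \<and> (\<forall>x\<in>S. kernel_apply S P f x = l * f x)"
  unfolding is_eigenvector_def kernel_apply_def ..

definition sqrt_embed :: "'s::finite set \<Rightarrow> ('s \<Rightarrow> real) \<Rightarrow> ('s \<Rightarrow> real) \<Rightarrow> real^'s" where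
  "sqrt_embed S p f = (\<chi> x. if x \<in> S then sqrt (p x) * f x else 0)"

lemma inner_sqrt_embed:
  assumes "\<And>x. x \<in> S \<Longrightarrow> 0 \<le> p x"
  shows "inner (sqrt_embed S p f) (sqrt_embed S p g) = inner_pi S p f g"
proof -
  have "inner (sqrt_embed S p f) (sqrt_embed S p g) = (\<Sum>x\<in>UNIV. if x \<in> S then p x * f x * g x else 0)"
    unfolding inner_vec_def sqrt_embed_def using assms
    by (intro sum.cong refl) (auto simp: real_sqrt_mult[symmetric] algebra_simps)
  also have "\<dots> = inner_pi S p f g"
    unfolding inner_pi_def by (simp add: sum.If_cases)
  finally show ?thesis .
qed

locale reversible_kernel =
  fixes S :: "'s::finite set" and p :: "'s \<Rightarrow> real" and P :: "'s \<Rightarrow> 's \<Rightarrow> real"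
  assumes weight_pos: "x \<in> S \<Longrightarrow> 0 < p x"
    and detailed_balance: "x \<in> S \<Longrightarrow> y \<in> S \<Longrightarrow> p x * P x y = p y * P y x"
    and row_sum: "x \<in> S \<Longrightarrow> (\<Sum>y\<in>S. P x y) = 1"
begin

lemma inner_pi_self_nonneg: "0 \<le> inner_pi S p f f"
  unfolding inner_pi_def using weight_pos by (intro sum_nonneg) (simp add: mult.assoc less_imp_le)

lemma inner_pi_self_pos: "x\<^sub>0 \<in> S \<Longrightarrow> f x\<^sub>0 \<noteq> 0 \<Longrightarrow> 0 < inner_pi S p f f"
  unfolding inner_pi_def using weight_pos
  by (intro sum_pos2[of S x\<^sub>0]) (simp_all add: mult.assoc less_imp_le flip: power2_eq_square)

lemma inner_pi_self_eq_0D: "inner_pi S p f f = 0 \<Longrightarrow> x \<in> S \<Longrightarrow> f x = 0"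
  using inner_pi_self_pos by fastforce

lemma kernel_apply_self_adjoint:
  "inner_pi S p (kernel_apply S P f) g = inner_pi S p f (kernel_apply S P g)"
proof -
  have "inner_pi S p (kernel_apply S P f) g = (\<Sum>x\<in>S. \<Sum>y\<in>S. p x * P x y * f y * g x)"
    unfolding inner_pi_def kernel_apply_def by (simp add: sum_distrib_left sum_distrib_right ac_simps)
  also have "\<dots> = (\<Sum>x\<in>S. \<Sum>y\<in>S. p y * P y x * f y * g x)"
    by (intro sum.cong refl) (simp add: detailed_balance)
  also have "\<dots> = inner_pi S p f (kernel_apply S P g)"
    unfolding inner_pi_def kernel_apply_def
    by (subst sum.swap) (simp add: sum_distrib_left sum_distrib_right ac_simps)
  finally show ?thesis .
qed

lemma kernel_apply_one: "x \<in> S \<Longrightarrow> kernel_apply S P (\<lambda>_. 1) x = 1"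
  by (simp add: kernel_apply_def row_sum)

lemma inner_pi_kernel_apply_one:
  "inner_pi S p (kernel_apply S P f) (\<lambda>_. 1) = inner_pi S p f (\<lambda>_. 1)"
  unfolding kernel_apply_self_adjoint by (rule inner_pi_cong) (simp_all add: kernel_apply_one)

lemma dirichlet_form_eq:
  "dirichlet_form S p P f = inner_pi S p f f - inner_pi S p (kernel_apply S P f) f"
proof -
  have row: "(\<Sum>x\<in>S. \<Sum>y\<in>S. p x * P x y * (f x)\<^sup>2) = inner_pi S p f f"
    unfolding inner_pi_def
    by (simp add: row_sum sum_distrib_left[symmetric] sum_distrib_right[symmetric] power2_eq_square ac_simps)
  have "(\<Sum>x\<in>S. \<Sum>y\<in>S. p x * P x y * (f y)\<^sup>2) = (\<Sum>x\<in>S. \<Sum>y\<in>S. p y * P y x * (f y)\<^sup>2)"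
    by (intro sum.cong refl) (simp add: detailed_balance)
  also have "\<dots> = inner_pi S p f f"
    by (subst sum.swap) (rule row)
  finally have col: "(\<Sum>x\<in>S. \<Sum>y\<in>S. p x * P x y * (f y)\<^sup>2) = inner_pi S p f f" .
  have cross: "(\<Sum>x\<in>S. \<Sum>y\<in>S. p x * P x y * f x * f y) = inner_pi S p (kernel_apply S P f) f"
    unfolding inner_pi_def kernel_apply_def by (simp add: sum_distrib_left sum_distrib_right ac_simps)
  have "(\<Sum>x\<in>S. \<Sum>y\<in>S. p x * P x y * (f x - f y)\<^sup>2) =
      (\<Sum>x\<in>S. \<Sum>y\<in>S. p x * P x y * (f x)\<^sup>2) + (\<Sum>x\<in>S. \<Sum>y\<in>S. p x * P x y * (f y)\<^sup>2)
        - 2 * (\<Sum>x\<in>S. \<Sum>y\<in>S. p x * P x y * f x * f y)"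
    by (simp add: sum_subtractf sum.distrib sum_distrib_left power2_diff algebra_simps)
  then show ?thesis
    unfolding dirichlet_form_def row col cross by simp
qed

lemma eigenvector_mean_zero:
  assumes "is_eigenvector S P l f" "l \<noteq> 1"
  shows "inner_pi S p f (\<lambda>_. 1) = 0"
proof -
  have "l * inner_pi S p f (\<lambda>_. 1) = inner_pi S p (kernel_apply S P f) (\<lambda>_. 1)"
    using assms(1) unfolding is_eigenvector_iff inner_pi_scale_left[symmetric]
    by (intro inner_pi_cong) auto
  also have "\<dots> = inner_pi S p f (\<lambda>_. 1)"
    by (rule inner_pi_kernel_apply_one)
  finally show ?thesis
    using assms(2) by simp
qed

lemma eigenvectors_orthogonal:
  assumes "is_eigenvector S P l f" "is_eigenvector S P l' g" "l \<noteq> l'"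
  shows "inner_pi S p f g = 0"
proof -
  have "l * inner_pi S p f g = inner_pi S p (kernel_apply S P f) g"
    using assms(1) unfolding is_eigenvector_iff inner_pi_scale_left[symmetric]
    by (intro inner_pi_cong) auto
  also have "\<dots> = inner_pi S p f (kernel_apply S P g)"
    by (rule kernel_apply_self_adjoint)
  also have "\<dots> = l' * inner_pi S p f g"
    using assms(2) unfolding is_eigenvector_iff inner_pi_scale_right[symmetric]
    by (intro inner_pi_cong) auto
  finally show ?thesis
    using assms(3) by simp
qed

text \<open>Weighted with \<open>sqrt p\<close>, eigenfunctions for distinct eigenvalues become pairwise orthogonal
  nonzero vectors of \<open>real^'s\<close>, which are linearly independent.\<close>

lemma finite_eigenvalues: "finite {l. is_eigenvalue S P l}"
proof -
  let ?L = "{l. is_eigenvalue S P l}"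
  define ef where "ef l = (SOME f. is_eigenvector S P l f)" for l
  have ef: "is_eigenvector S P l (ef l)" if "l \<in> ?L" for l
    using that someI_ex[of "is_eigenvector S P l"] unfolding ef_def is_eigenvalue_def by simp
  define F where "F l = sqrt_embed S p (ef l)" for l
  have F_inner: "inner (F l) (F l') = inner_pi S p (ef l) (ef l')" for l l'
    unfolding F_def by (rule inner_sqrt_embed) (simp add: weight_pos less_imp_le)
  have F_nonzero: "F l \<noteq> 0" if "l \<in> ?L" for l
  proof -
    from ef[OF that] obtain x where "x \<in> S" "ef l x \<noteq> 0"
      unfolding is_eigenvector_def by blast
    then have "inner (F l) (F l) \<noteq> 0"
      unfolding F_inner using inner_pi_self_pos by fastforce
    then show ?thesis
      by auto
  qed
  have F_orthogonal: "orthogonal (F l) (F l')" if "l \<in> ?L" "l' \<in> ?L" "l \<noteq> l'" for l l'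
    unfolding orthogonal_def F_inner using eigenvectors_orthogonal[OF ef ef] that by blast
  have "inj_on F ?L"
  proof (rule inj_onI)
    fix l l' assume "l \<in> ?L" "l' \<in> ?L" "F l = F l'"
    then show "l = l'"
      using F_orthogonal F_nonzero orthogonal_self by metis
  qed
  moreover have "independent (F ` ?L)"
    by (rule pairwise_orthogonal_independent)
      (auto simp: pairwise_def F_nonzero intro!: F_orthogonal)
  ultimately show ?thesis
    using independent_imp_finite finite_imageD by blast
qed

end

subsection \<open>A mean-zero eigenfunction via the Rayleigh quotient\<close>

text \<open>Mean-zero unit functions, as vectors vanishing off \<open>S\<close> so that they form a compact set.\<close>

definition mean_zero_sphere :: "'s::finite set \<Rightarrow> ('s \<Rightarrow> real) \<Rightarrow> (real^'s) set" where
  "mean_zero_sphere S p =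
     {x. (\<forall>i. i \<notin> S \<longrightarrow> x $ i = 0) \<and> inner_pi S p (($) x) (\<lambda>_. 1) = 0 \<and> inner_pi S p (($) x) (($) x) = 1}"

definition is_rayleigh_maximizer :: "'s set \<Rightarrow> ('s \<Rightarrow> real) \<Rightarrow> ('s \<Rightarrow> 's \<Rightarrow> real) \<Rightarrow> ('s \<Rightarrow> real) \<Rightarrow> bool" where
  "is_rayleigh_maximizer S p P y \<longleftrightarrow> inner_pi S p y (\<lambda>_. 1) = 0 \<and> inner_pi S p y y = 1 \<and>
     (\<forall>h. inner_pi S p h (\<lambda>_. 1) = 0 \<longrightarrow>
        inner_pi S p (kernel_apply S P h) h \<le> inner_pi S p (kernel_apply S P y) y * inner_pi S p h h)"

lemma linear_coeff_eq_0_if_nonpos: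
  fixes a b :: real
  assumes "\<And>t. a * t + b * t\<^sup>2 \<le> 0"
  shows "a = 0"
proof (rule ccontr)
  assume "a \<noteq> 0"
  define s where "s = \<bar>b\<bar> + 1"
  have "s > 0" "\<bar>b\<bar> < s"
    unfolding s_def by auto
  define t where "t = a / (2 * s)"
  have "a * t + b * t\<^sup>2 = t\<^sup>2 * (2 * s + b)"
    unfolding t_def using \<open>s > 0\<close> by (simp add: field_simps power2_eq_square)
  also have "\<dots> > 0"
    using \<open>a \<noteq> 0\<close> \<open>s > 0\<close> \<open>\<bar>b\<bar> < s\<close> unfolding t_def by (intro mult_pos_pos) auto
  finally show False
    using assms[of t] by simp
qed

context reversible_kernel
begin

lemma compact_mean_zero_sphere: "compact (mean_zero_sphere S p)"
proof -
  have "closed (mean_zero_sphere S p)"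
    unfolding mean_zero_sphere_def inner_pi_def
    by (intro closed_Collect_conj closed_Collect_all closed_Collect_imp closed_Collect_eq
        continuous_intros) auto
  moreover have "bounded (mean_zero_sphere S p)"
    unfolding bounded_iff
  proof (intro exI ballI)
    fix x assume x: "x \<in> mean_zero_sphere S p"
    have "\<bar>x $ i\<bar> \<le> (if i \<in> S then 1 + 1 / p i else 0)" for i
    proof (cases "i \<in> S")
      case True
      have "p i * x $ i * x $ i \<le> inner_pi S p (($) x) (($) x)"
        unfolding inner_pi_def using True weight_pos
        by (intro member_le_sum) (auto simp: mult.assoc less_imp_le)
      then have "(x $ i)\<^sup>2 \<le> 1 / p i"
        using x weight_pos[OF True] by (simp add: mean_zero_sphere_def field_simps power2_eq_square)
      moreover have "\<bar>x $ i\<bar> \<le> 1 + (x $ i)\<^sup>2"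
        using zero_le_power2[of "\<bar>x $ i\<bar> - 1"] zero_le_power2[of "x $ i"]
        unfolding power2_diff by simp
      ultimately show ?thesis
        using True by simp
    qed (use x in \<open>simp add: mean_zero_sphere_def\<close>)
    then have "(\<Sum>i\<in>UNIV. \<bar>x $ i\<bar>) \<le> (\<Sum>i\<in>UNIV. if i \<in> S then 1 + 1 / p i else 0)"
      by (intro sum_mono)
    then show "norm x \<le> (\<Sum>i\<in>UNIV. if i \<in> S then 1 + 1 / p i else 0)"
      using norm_le_l1_cart order.trans by blast
  qed
  ultimately show ?thesis
    by (simp add: compact_eq_bounded_closed)
qed

lemma rescale_into_mean_zero_sphere:
  assumes mean: "inner_pi S p h (\<lambda>_. 1) = 0" and norm: "0 < inner_pi S p h h"
  defines "c \<equiv> 1 / sqrt (inner_pi S p h h)"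
  obtains x where "x \<in> mean_zero_sphere S p" "\<And>i. i \<in> S \<Longrightarrow> x $ i = c * h i"
proof
  let ?x = "\<chi> i. if i \<in> S then c * h i else 0"
  show "?x $ i = c * h i" if "i \<in> S" for i
    using that by simp
  have "inner_pi S p (($) ?x) (\<lambda>_. 1) = inner_pi S p (\<lambda>i. c * h i) (\<lambda>_. 1)"
    by (rule inner_pi_cong) auto
  moreover have "inner_pi S p (($) ?x) (($) ?x) = inner_pi S p (\<lambda>i. c * h i) (\<lambda>i. c * h i)"
    by (rule inner_pi_cong) auto
  moreover have "c * c * inner_pi S p h h = 1"
    using norm unfolding c_def by (simp add: real_sqrt_mult[symmetric])
  ultimately show "?x \<in> mean_zero_sphere S p"
    unfolding mean_zero_sphere_def using mean
    by (simp add: inner_pi_scale_left inner_pi_scale_right)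
qed

lemma mean_zero_sphere_nonempty:
  assumes "card S \<ge> 2"
  shows "mean_zero_sphere S p \<noteq> {}"
proof -
  obtain a b where ab: "a \<in> S" "b \<in> S" "a \<noteq> b"
    using assms card_le_Suc0_iff_eq[of S] by force
  define h where "h x = (if x = a then p b else 0) - (if x = b then p a else 0)" for x
  have "inner_pi S p h (\<lambda>_. 1) = 0"
    unfolding h_def inner_pi_diff_left unfolding inner_pi_def using ab
    by (simp add: if_distrib[of "\<lambda>z. _ * z"] cong: if_cong)
  moreover have "0 < inner_pi S p h h"
    using ab weight_pos[of b] by (intro inner_pi_self_pos[of a]) (auto simp: h_def)
  ultimately show ?thesis
    by (metis rescale_into_mean_zero_sphere empty_iff)
qed

lemma quadratic_form_le_if_le_on_mean_zero_sphere:
  assumes sphere: "\<And>x. x \<in> mean_zero_sphere S p \<Longrightarrow> inner_pi S p (kernel_apply S P (($) x)) (($) x) \<le> l"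
    and mean: "inner_pi S p h (\<lambda>_. 1) = 0"
  shows "inner_pi S p (kernel_apply S P h) h \<le> l * inner_pi S p h h"
proof (cases "inner_pi S p h h = 0")
  case True
  then have "inner_pi S p (kernel_apply S P h) h = inner_pi S p (kernel_apply S P h) (\<lambda>_. 0)"
    by (intro inner_pi_cong) (auto dest: inner_pi_self_eq_0D)
  then show ?thesis
    using True by (simp add: inner_pi_zero_right)
next
  case False
  then have norm: "0 < inner_pi S p h h"
    using inner_pi_self_nonneg[of h] by linarith
  define c where "c = 1 / sqrt (inner_pi S p h h)"
  obtain x where x: "x \<in> mean_zero_sphere S p" "\<And>i. i \<in> S \<Longrightarrow> x $ i = c * h i"
    using rescale_into_mean_zero_sphere[OF mean norm] unfolding c_def by blast
  have "inner_pi S p (kernel_apply S P (($) x)) (($) x) = inner_pi S p (\<lambda>i. c * kernel_apply S P h i) (\<lambda>i. c * h i)"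
    using kernel_apply_cong[of S "($) x" "\<lambda>i. c * h i" P]
    by (intro inner_pi_cong) (auto simp: x(2) kernel_apply_scale)
  also have "\<dots> = c * c * inner_pi S p (kernel_apply S P h) h"
    by (simp add: inner_pi_scale_left inner_pi_scale_right)
  also have "c * c = 1 / inner_pi S p h h"
    using norm unfolding c_def by (simp add: real_sqrt_mult[symmetric])
  finally show ?thesis
    using sphere[OF x(1)] norm by (simp add: divide_le_eq)
qed

lemma exists_rayleigh_maximizer:
  assumes "card S \<ge> 2"
  obtains y where "is_rayleigh_maximizer S p P y"
proof -
  let ?q = "\<lambda>x. inner_pi S p (kernel_apply S P (($) x)) (($) x)"
  have "continuous_on (mean_zero_sphere S p) ?q"
    unfolding inner_pi_def kernel_apply_def by (intro continuous_intros)
  then obtain z where z: "z \<in> mean_zero_sphere S p" and z_max: "\<And>x. x \<in> mean_zero_sphere S p \<Longrightarrow> ?q x \<le> ?q z"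
    using continuous_attains_sup[OF compact_mean_zero_sphere mean_zero_sphere_nonempty[OF assms]] by blast
  have "is_rayleigh_maximizer S p P (($) z)"
    unfolding is_rayleigh_maximizer_def
    using z quadratic_form_le_if_le_on_mean_zero_sphere[OF z_max] by (simp add: mean_zero_sphere_def)
  then show ?thesis
    by (rule that)
qed

text \<open>The first variation of the Rayleigh quotient at a maximizer \<open>y\<close> vanishes in every mean-zero
  direction \<open>g\<close>; since \<open>kernel_apply S P y - \<lambda> y\<close> is itself mean-zero, it vanishes.\<close>

lemma rayleigh_maximizer_eigenfunction:
  assumes "is_rayleigh_maximizer S p P y" "x \<in> S"
  shows "kernel_apply S P y x = inner_pi S p (kernel_apply S P y) y * y x"
proof -
  let ?l = "inner_pi S p (kernel_apply S P y) y"
  have mean: "inner_pi S p y (\<lambda>_. 1) = 0" and norm: "inner_pi S p y y = 1"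
    and max: "\<And>h. inner_pi S p h (\<lambda>_. 1) = 0 \<Longrightarrow> inner_pi S p (kernel_apply S P h) h \<le> ?l * inner_pi S p h h"
    using assms(1) unfolding is_rayleigh_maximizer_def by blast+
  have orth: "inner_pi S p (kernel_apply S P y) g = ?l * inner_pi S p y g"
    if g: "inner_pi S p g (\<lambda>_. 1) = 0" for g
  proof -
    have "2 * (inner_pi S p (kernel_apply S P y) g - ?l * inner_pi S p y g) * t
        + (inner_pi S p (kernel_apply S P g) g - ?l * inner_pi S p g g) * t\<^sup>2 \<le> 0" for t
    proof -
      let ?h = "\<lambda>x. y x + t * g x"
      have "inner_pi S p ?h (\<lambda>_. 1) = 0"
        using mean g by (simp add: inner_pi_add_left inner_pi_scale_left)
      then have "inner_pi S p (kernel_apply S P ?h) ?h \<le> ?l * inner_pi S p ?h ?h"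
        by (rule max)
      moreover have "inner_pi S p (kernel_apply S P ?h) ?h =
          ?l + 2 * t * inner_pi S p (kernel_apply S P y) g + t\<^sup>2 * inner_pi S p (kernel_apply S P g) g"
        using kernel_apply_self_adjoint[of g y] inner_pi_commute[of S p g "kernel_apply S P y"]
        by (simp add: kernel_apply_add kernel_apply_scale inner_pi_add_left inner_pi_add_right
            inner_pi_scale_left inner_pi_scale_right power2_eq_square algebra_simps)
      moreover have "inner_pi S p ?h ?h = 1 + 2 * t * inner_pi S p y g + t\<^sup>2 * inner_pi S p g g"
        using norm inner_pi_commute[of S p g y]
        by (simp add: inner_pi_add_left inner_pi_add_right inner_pi_scale_left inner_pi_scale_right
            power2_eq_square algebra_simps)
      ultimately show ?thesis
        by (simp add: algebra_simps)
    qed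
    then show ?thesis
      using linear_coeff_eq_0_if_nonpos by fastforce
  qed
  define r where "r x = kernel_apply S P y x - ?l * y x" for x
  have "inner_pi S p r (\<lambda>_. 1) = 0"
    unfolding r_def using mean by (simp add: inner_pi_diff_left inner_pi_scale_left inner_pi_kernel_apply_one)
  then have "inner_pi S p r r = 0"
    using orth unfolding r_def by (simp add: inner_pi_diff_left inner_pi_scale_left)
  then show ?thesis
    using inner_pi_self_eq_0D[of r x] \<open>x \<in> S\<close> by (simp add: r_def)
qed

lemma exists_mean_zero_eigenvector:
  assumes "card S \<ge> 2"
  obtains l f where "is_eigenvector S P l f" "inner_pi S p f (\<lambda>_. 1) = 0"
proof -
  obtain y where y: "is_rayleigh_maximizer S p P y"
    using exists_rayleigh_maximizer[OF assms] .
  have "\<exists>x\<in>S. y x \<noteq> 0"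
  proof (rule ccontr)
    assume "\<not> ?thesis"
    then have "inner_pi S p y y = inner_pi S p y (\<lambda>_. 0)"
      by (intro inner_pi_cong) auto
    with y show False
      by (simp add: is_rayleigh_maximizer_def inner_pi_zero_right)
  qed
  then show ?thesis
    using that[of _ y] y rayleigh_maximizer_eigenfunction[OF y]
    by (auto simp: is_eigenvector_iff is_rayleigh_maximizer_def)
qed

lemma eigenvalue_one: "S \<noteq> {} \<Longrightarrow> is_eigenvalue S P 1"
  unfolding is_eigenvalue_def is_eigenvector_def using row_sum by (intro exI[of _ "\<lambda>_. 1"]) auto

context
  fixes C :: real
  assumes poincare: "poincare_inequality S p P C" and C_pos: "0 < C"
begin

lemma mean_zero_eigenvalue_le:
  assumes eig: "is_eigenvector S P l f" and mean: "inner_pi S p f (\<lambda>_. 1) = 0"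
  shows "l \<le> 1 - 1 / C"
proof -
  obtain x where "x \<in> S" "f x \<noteq> 0"
    using eig by (auto simp: is_eigenvector_iff)
  then have norm: "0 < inner_pi S p f f"
    by (rule inner_pi_self_pos)
  have "inner_pi S p (kernel_apply S P f) f = l * inner_pi S p f f"
    using eig unfolding is_eigenvector_iff inner_pi_scale_left[symmetric]
    by (intro inner_pi_cong) auto
  then have "inner_pi S p f f \<le> C * (1 - l) * inner_pi S p f f"
    using poincare mean unfolding poincare_inequality_def dirichlet_form_eq
    by (auto simp: algebra_simps)
  then have "1 \<le> C * (1 - l)"
    using norm by (simp add: mult_le_cancel_right1)
  then show ?thesis
    using C_pos by (simp add: field_simps)
qed

lemma eigenvector_one_not_mean_zero:
  "is_eigenvector S P 1 f \<Longrightarrow> inner_pi S p f (\<lambda>_. 1) \<noteq> 0"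
  using mean_zero_eigenvalue_le[of 1 f] C_pos by auto

lemma eigenvalue_ne_one_le: "is_eigenvector S P l f \<Longrightarrow> l \<noteq> 1 \<Longrightarrow> l \<le> 1 - 1 / C"
  using mean_zero_eigenvalue_le eigenvector_mean_zero by blast

lemma lambda1_eq_one:
  assumes "S \<noteq> {}"
  shows "lambda1 S P = 1"
  unfolding lambda1_def
proof (rule Max_eqI[OF finite_eigenvalues])
  show "1 \<in> {l. is_eigenvalue S P l}"
    using eigenvalue_one[OF assms] by simp
  show "l \<le> 1" if "l \<in> {l. is_eigenvalue S P l}" for l
  proof (cases "l = 1")
    case False
    with that have "l \<le> 1 - 1 / C"
      using eigenvalue_ne_one_le unfolding is_eigenvalue_def by blast
    also have "\<dots> \<le> 1"
      using C_pos by simp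
    finally show ?thesis .
  qed simp
qed

text \<open>Two independent eigenfunctions for \<open>1\<close> would combine into a mean-zero one.\<close>

lemma not_mult_ge2_one: "\<not> mult_ge2 S P 1"
proof
  assume "mult_ge2 S P 1"
  then obtain f g where f: "is_eigenvector S P 1 f" and g: "is_eigenvector S P 1 g"
    and indep: "\<And>a b. \<forall>x\<in>S. a * f x + b * g x = 0 \<Longrightarrow> a = 0 \<and> b = 0"
    unfolding mult_ge2_def by blast
  define a where "a = inner_pi S p g (\<lambda>_. 1)"
  define b where "b = - inner_pi S p f (\<lambda>_. 1)"
  define h where "h x = a * f x + b * g x" for x
  have mean: "inner_pi S p h (\<lambda>_. 1) = 0"
    unfolding h_def a_def b_def by (simp add: inner_pi_add_left inner_pi_diff_left inner_pi_scale_left)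
  show False
  proof (cases "\<exists>x\<in>S. h x \<noteq> 0")
    case True
    moreover have "kernel_apply S P h x = 1 * h x" if "x \<in> S" for x
      using f g that unfolding h_def is_eigenvector_iff by (simp add: kernel_apply_add kernel_apply_scale)
    ultimately have "is_eigenvector S P 1 h"
      by (simp add: is_eigenvector_iff)
    then show False
      using eigenvector_one_not_mean_zero mean by blast
  next
    case False
    then have "b = 0"
      using indep unfolding h_def by blast
    then show False
      using eigenvector_one_not_mean_zero[OF f] by (simp add: b_def)
  qed
qed

lemma lambda2_le_of_poincare:
  assumes "card S \<ge> 2"
  shows "lambda2 S P \<le> 1 - 1 / C"
proof -
  obtain l f where "is_eigenvector S P l f" "inner_pi S p f (\<lambda>_. 1) = 0"
    using exists_mean_zero_eigenvector[OF assms] .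
  then have second: "l \<in> {l. is_eigenvalue S P l} - {1}"
    using eigenvector_one_not_mean_zero unfolding is_eigenvalue_def by auto
  have "Max ({l. is_eigenvalue S P l} - {1}) \<le> 1 - 1 / C"
  proof (rule Max.boundedI)
    show "finite ({l. is_eigenvalue S P l} - {1})"
      using finite_eigenvalues by simp
    show "m \<le> 1 - 1 / C" if "m \<in> {l. is_eigenvalue S P l} - {1}" for m
      using that eigenvalue_ne_one_le unfolding is_eigenvalue_def by blast
  qed (use second in blast)
  moreover have "lambda1 S P = 1"
    using assms by (intro lambda1_eq_one) auto
  ultimately show ?thesis
    unfolding lambda2_def using not_mult_ge2_one by simp
qed

lemma tau2_le_of_poincare:
  assumes "card S \<ge> 2"
  shows "lambda2 S P < 1 \<and> tau2 S P \<le> C"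
proof -
  have "1 - 1 / C < 1"
    using C_pos by simp
  then have "lambda2 S P < 1"
    using lambda2_le_of_poincare[OF assms] by linarith
  moreover have "1 \<le> C * (1 - lambda2 S P)"
    using lambda2_le_of_poincare[OF assms] C_pos by (simp add: field_simps)
  ultimately show ?thesis
    unfolding tau2_def by (simp add: pos_divide_le_eq)
qed

end

end

section \<open>Canonical paths\<close>

definition list_path :: "'s set \<Rightarrow> 's \<Rightarrow> 's \<Rightarrow> 's list \<Rightarrow> bool" where
  "list_path S x y \<gamma> \<longleftrightarrow> \<gamma> \<noteq> [] \<and> hd \<gamma> = x \<and> last \<gamma> = y \<and> distinct \<gamma> \<and> set \<gamma> \<subseteq> S"

definition path_congestion :: "'s set \<Rightarrow> ('s \<Rightarrow> real) \<Rightarrow> ('s \<Rightarrow> 's \<Rightarrow> 's list) \<Rightarrow> 's \<times> 's \<Rightarrow> real" where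
  "path_congestion S p \<Gamma> e =
     (\<Sum>q\<in>{q\<in>S \<times> S. e \<in> path_edges (\<Gamma> (fst q) (snd q))}.
        p (fst q) * p (snd q) * real (path_len (\<Gamma> (fst q) (snd q))))"

lemma sum_list_zip_tl_telescope:
  fixes f :: "'a \<Rightarrow> 'b::ab_group_add"
  shows "xs \<noteq> [] \<Longrightarrow> sum_list (map (\<lambda>e. f (fst e) - f (snd e)) (zip xs (tl xs))) = f (hd xs) - f (last xs)"
  by (induction xs rule: induct_list012) auto

lemma path_edges_subset:
  assumes "set xs \<subseteq> S"
  shows "path_edges xs \<subseteq> S \<times> S"
proof -
  have "set (tl xs) \<subseteq> set xs"
    by (cases xs) auto
  with assms show ?thesis
    unfolding path_edges_def by (auto elim: in_set_zipE)
qed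

lemma square_diff_le_path_len_mult:
  fixes f :: "'s \<Rightarrow> real"
  assumes "xs \<noteq> []" "distinct xs"
  shows "(f (hd xs) - f (last xs))\<^sup>2 \<le> real (path_len xs) * (\<Sum>e\<in>path_edges xs. (f (fst e) - f (snd e))\<^sup>2)"
proof -
  have distinct: "distinct (zip xs (tl xs))"
    by (rule distinct_zipI1[OF assms(2)])
  have "f (hd xs) - f (last xs) = (\<Sum>e\<in>path_edges xs. f (fst e) - f (snd e))"
    unfolding path_edges_def sum_list_zip_tl_telescope[OF assms(1), symmetric]
    by (rule sum_list_distinct_conv_sum_set[OF distinct])
  moreover have "card (path_edges xs) = path_len xs"
    unfolding path_edges_def path_len_def using distinct_card[OF distinct] by simp
  ultimately show ?thesis
    using sum_squared_le_sum_of_squares[of "\<lambda>e. f (fst e) - f (snd e)" "path_edges xs"]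
    by (simp add: mult.commute)
qed

lemma double_sum_square_diff:
  assumes "sum p S = 1" "inner_pi S p f (\<lambda>_. 1) = 0"
  shows "(\<Sum>x\<in>S. \<Sum>y\<in>S. p x * p y * (f x - f y)\<^sup>2) = 2 * inner_pi S p f f"
proof -
  have mean: "(\<Sum>x\<in>S. p x * f x) = 0"
    using assms(2) unfolding inner_pi_def by simp
  have "(\<Sum>x\<in>S. \<Sum>y\<in>S. p x * p y * (f x - f y)\<^sup>2) =
        (\<Sum>x\<in>S. \<Sum>y\<in>S. p y * (p x * (f x)\<^sup>2)) + (\<Sum>x\<in>S. \<Sum>y\<in>S. p x * (p y * (f y)\<^sup>2))
        - 2 * (\<Sum>x\<in>S. \<Sum>y\<in>S. (p x * f x) * (p y * f y))"
    by (simp add: power2_diff sum_subtractf sum.distrib sum_distrib_left algebra_simps)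
  also have "\<dots> = 2 * inner_pi S p f f"
    unfolding sum_distrib_left[symmetric] sum_distrib_right[symmetric] assms(1) mean inner_pi_def
    by (simp add: power2_eq_square mult.assoc)
  finally show ?thesis .
qed

lemma double_sum_square_diff_le_congestion:
  fixes \<Gamma> :: "'s \<Rightarrow> 's \<Rightarrow> 's list"
  assumes "finite S" and p_nonneg: "\<And>x. x \<in> S \<Longrightarrow> 0 \<le> p x"
    and paths: "\<And>x y. x \<in> S \<Longrightarrow> y \<in> S \<Longrightarrow> list_path S x y (\<Gamma> x y)"
  shows "(\<Sum>x\<in>S. \<Sum>y\<in>S. p x * p y * (f x - f y)\<^sup>2)
    \<le> (\<Sum>e\<in>S \<times> S. (f (fst e) - f (snd e))\<^sup>2 * path_congestion S p \<Gamma> e)"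
proof -
  define D where "D e = (f (fst e) - f (snd e))\<^sup>2" for e
  define L where "L q = p (fst q) * p (snd q) * real (path_len (\<Gamma> (fst q) (snd q)))" for q
  let ?E = "\<lambda>q. path_edges (\<Gamma> (fst q) (snd q))"
  have "(\<Sum>x\<in>S. \<Sum>y\<in>S. p x * p y * (f x - f y)\<^sup>2) = (\<Sum>q\<in>S \<times> S. p (fst q) * p (snd q) * D q)"
    by (simp add: sum.cartesian_product D_def split_beta)
  also have "\<dots> \<le> (\<Sum>q\<in>S \<times> S. L q * (\<Sum>e\<in>?E q. D e))"
  proof (rule sum_mono)
    fix q assume q: "q \<in> S \<times> S"
    have "D q \<le> real (path_len (\<Gamma> (fst q) (snd q))) * (\<Sum>e\<in>?E q. D e)"
      using square_diff_le_path_len_mult[of "\<Gamma> (fst q) (snd q)" f] paths[of "fst q" "snd q"] q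
      unfolding D_def list_path_def by auto
    then show "p (fst q) * p (snd q) * D q \<le> L q * (\<Sum>e\<in>?E q. D e)"
      unfolding L_def using q p_nonneg by (auto simp: mult.assoc intro!: mult_left_mono)
  qed
  also have "\<dots> = (\<Sum>q\<in>S \<times> S. \<Sum>e\<in>{e\<in>S \<times> S. e \<in> ?E q}. L q * D e)"
  proof (intro sum.cong refl)
    fix q assume "q \<in> S \<times> S"
    then have "?E q \<subseteq> S \<times> S"
      using paths[of "fst q" "snd q"] unfolding list_path_def by (intro path_edges_subset) auto
    then show "L q * (\<Sum>e\<in>?E q. D e) = (\<Sum>e\<in>{e\<in>S \<times> S. e \<in> ?E q}. L q * D e)"
      by (auto simp: sum_distrib_left Int_absorb1 Collect_conj_eq)
  qed
  also have "\<dots> = (\<Sum>e\<in>S \<times> S. \<Sum>q\<in>{q\<in>S \<times> S. e \<in> ?E q}. L q * D e)"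
    using \<open>finite S\<close> by (intro sum.swap_restrict) auto
  also have "\<dots> = (\<Sum>e\<in>S \<times> S. D e * path_congestion S p \<Gamma> e)"
    unfolding path_congestion_def L_def by (simp add: sum_distrib_left mult.commute)
  finally show ?thesis
    unfolding D_def .
qed

lemma poincare_inequality_of_canonical_paths:
  fixes \<Gamma> :: "'s \<Rightarrow> 's \<Rightarrow> 's list"
  assumes "finite S" and p_nonneg: "\<And>x. x \<in> S \<Longrightarrow> 0 \<le> p x" and p_sum: "sum p S = 1"
    and P_nonneg: "\<And>x y. x \<in> S \<Longrightarrow> y \<in> S \<Longrightarrow> x \<noteq> y \<Longrightarrow> 0 \<le> P x y" and "0 \<le> C"
    and paths: "\<And>x y. x \<in> S \<Longrightarrow> y \<in> S \<Longrightarrow> list_path S x y (\<Gamma> x y)"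
    and congestion: "\<And>x y a b. x \<in> S \<Longrightarrow> y \<in> S \<Longrightarrow> (a, b) \<in> path_edges (\<Gamma> x y) \<Longrightarrow>
      path_congestion S p \<Gamma> (a, b) \<le> C * (p a * P a b)"
  shows "poincare_inequality S p P C"
  unfolding poincare_inequality_def
proof (intro allI impI)
  fix f assume mean: "inner_pi S p f (\<lambda>_. 1) = 0"
  have edge_bound: "path_congestion S p \<Gamma> (a, b) \<le> C * (p a * P a b)" if "a \<in> S" "b \<in> S" "a \<noteq> b" for a b
  proof (cases "\<exists>q\<in>S \<times> S. (a, b) \<in> path_edges (\<Gamma> (fst q) (snd q))")
    case True
    then show ?thesis
      using congestion by auto
  next
    case False
    then have "{q \<in> S \<times> S. (a, b) \<in> path_edges (\<Gamma> (fst q) (snd q))} = {}"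
      by auto
    then have "path_congestion S p \<Gamma> (a, b) = 0"
      by (simp only: path_congestion_def sum.empty)
    then show ?thesis
      using that p_nonneg P_nonneg \<open>0 \<le> C\<close> by auto
  qed
  have "2 * inner_pi S p f f = (\<Sum>x\<in>S. \<Sum>y\<in>S. p x * p y * (f x - f y)\<^sup>2)"
    using double_sum_square_diff[OF p_sum mean] by simp
  also have "\<dots> \<le> (\<Sum>e\<in>S \<times> S. (f (fst e) - f (snd e))\<^sup>2 * path_congestion S p \<Gamma> e)"
    by (rule double_sum_square_diff_le_congestion[OF \<open>finite S\<close> p_nonneg paths])
  also have "\<dots> \<le> (\<Sum>e\<in>S \<times> S. (f (fst e) - f (snd e))\<^sup>2 * (C * (p (fst e) * P (fst e) (snd e))))"
  proof (rule sum_mono)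
    fix e assume "e \<in> S \<times> S"
    then show "(f (fst e) - f (snd e))\<^sup>2 * path_congestion S p \<Gamma> e
        \<le> (f (fst e) - f (snd e))\<^sup>2 * (C * (p (fst e) * P (fst e) (snd e)))"
      using edge_bound[of "fst e" "snd e"] by (cases "fst e = snd e") (auto intro: mult_left_mono)
  qed
  also have "\<dots> = 2 * (C * dirichlet_form S p P f)"
    unfolding dirichlet_form_def
    by (simp add: sum.cartesian_product sum_distrib_left algebra_simps split_beta)
  finally show "inner_pi S p f f \<le> C * dirichlet_form S p P f"
    by simp
qed

section \<open>Heat-bath Glauber dynamics\<close>

definition remote_weight :: "('v \<times> 'v) set \<Rightarrow> ('v \<Rightarrow> 'v \<Rightarrow> 'c \<Rightarrow> 'c \<Rightarrow> real) \<Rightarrow> 'v \<Rightarrow> ('v \<Rightarrow> 'c) \<Rightarrow> real" where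
  "remote_weight E \<alpha> v \<sigma> = (\<Prod>(x, y)\<in>{e\<in>E. fst e \<noteq> v \<and> snd e \<noteq> v}. \<alpha> x y (\<sigma> x) (\<sigma> y))"

lemma weight_fun_upd:
  fixes E :: "('v::finite \<times> 'v) set"
  shows "weight E \<alpha> (\<sigma>(v := a)) = cond_weight E \<alpha> v a \<sigma> * remote_weight E \<alpha> v \<sigma>"
proof -
  have "weight E \<alpha> (\<sigma>(v := a)) =
      cond_weight E \<alpha> v a \<sigma> * (\<Prod>(x, y)\<in>{e\<in>E. fst e \<noteq> v \<and> snd e \<noteq> v}. \<alpha> x y ((\<sigma>(v := a)) x) ((\<sigma>(v := a)) y))"
    unfolding weight_def cond_weight_def
    by (subst prod.Int_Diff[of E _ "{e. fst e = v \<or> snd e = v}"]) (auto intro!: arg_cong2[where f = "(*)"] prod.cong)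
  also have "(\<Prod>(x, y)\<in>{e\<in>E. fst e \<noteq> v \<and> snd e \<noteq> v}. \<alpha> x y ((\<sigma>(v := a)) x) ((\<sigma>(v := a)) y)) =
      remote_weight E \<alpha> v \<sigma>"
    unfolding remote_weight_def by (intro prod.cong) auto
  finally show ?thesis .
qed

lemma weight_eq_cond_weight_mult_remote_weight:
  fixes E :: "('v::finite \<times> 'v) set"
  shows "weight E \<alpha> \<sigma> = cond_weight E \<alpha> v (\<sigma> v) \<sigma> * remote_weight E \<alpha> v \<sigma>"
  using weight_fun_upd[of E \<alpha> \<sigma> v "\<sigma> v"] by simp

lemma cond_weight_fun_upd: "cond_weight E \<alpha> v a (\<sigma>(v := b)) = cond_weight E \<alpha> v a \<sigma>"
  unfolding cond_weight_def by simp

lemma heatbath_fun_upd: "heatbath E \<alpha> (\<sigma>(v := b)) v a = heatbath E \<alpha> \<sigma> v a"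
  unfolding heatbath_def by (simp add: cond_weight_fun_upd)

lemma glauber_off_fun_upd:
  assumes "c \<noteq> \<sigma> v"
  shows "glauber_off E \<alpha> \<rho> \<sigma> (\<sigma>(v := c)) = \<rho> v * heatbath E \<alpha> \<sigma> v c"
proof -
  have "{w. (\<sigma>(v := c)) w \<noteq> \<sigma> w} = {v}"
    using assms by auto
  moreover have "(THE w. (\<sigma>(v := c)) w \<noteq> \<sigma> w) = v"
    using assms by (intro the_equality) (auto split: if_splits)
  ultimately show ?thesis
    unfolding glauber_off_def Let_def by simp
qed

lemma glauber_fun_upd:
  assumes "c \<noteq> \<sigma> v"
  shows "glauber E \<alpha> \<rho> \<sigma> (\<sigma>(v := c)) = \<rho> v * heatbath E \<alpha> \<sigma> v c"
proof -
  have "\<sigma>(v := c) \<noteq> \<sigma>"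
    using assms by (metis fun_upd_same)
  then show ?thesis
    unfolding glauber_def using glauber_off_fun_upd[of c \<sigma> v, OF assms] by simp
qed

lemma edge_flow_glauber_fun_upd:
  "c \<noteq> \<sigma> v \<Longrightarrow> edge_flow E \<alpha> (glauber E \<alpha> \<rho>) (\<sigma>, \<sigma>(v := c)) = \<rho> v * (gibbs E \<alpha> \<sigma> * heatbath E \<alpha> \<sigma> v c)"
  by (simp add: edge_flow_def glauber_fun_upd)

lemma glauber_off_nonzero_imp_fun_upd:
  assumes "glauber_off E \<alpha> \<rho> \<sigma> \<tau> \<noteq> 0"
  obtains v where "\<tau> v \<noteq> \<sigma> v" "\<tau> = \<sigma>(v := \<tau> v)"
proof -
  have "card {w. \<tau> w \<noteq> \<sigma> w} = 1"
  proof (rule ccontr)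
    assume "card {w. \<tau> w \<noteq> \<sigma> w} \<noteq> 1"
    with assms show False
      unfolding glauber_off_def by simp
  qed
  then obtain v where v: "{w. \<tau> w \<noteq> \<sigma> w} = {v}"
    by (rule card_1_singletonE)
  have "\<tau> v \<noteq> \<sigma> v"
    using v by blast
  moreover have "\<tau> w = \<sigma> w" if "w \<noteq> v" for w
    using v that by blast
  then have "\<tau> = \<sigma>(v := \<tau> v)"
    by (intro ext) simp
  ultimately show ?thesis
    by (rule that)
qed

text \<open>Both sides of the detailed balance equation for a single-site move \<open>\<sigma> \<rightarrow> \<sigma>(v := c)\<close> equal
  \<open>\<rho> v\<close> times the product of the two neighbourhood factors and the remote weight, divided by
  the two normalisations.\<close>

lemma glauber_detailed_balance:
  fixes E :: "('v::finite \<times> 'v) set"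
  shows "gibbs E \<alpha> \<sigma> * glauber E \<alpha> \<rho> \<sigma> \<tau> = gibbs E \<alpha> \<tau> * glauber E \<alpha> \<rho> \<tau> \<sigma>"
proof (cases "\<exists>v. \<tau> v \<noteq> \<sigma> v \<and> \<tau> = \<sigma>(v := \<tau> v)")
  case True
  then obtain v c where c: "c \<noteq> \<sigma> v" and \<tau>: "\<tau> = \<sigma>(v := c)"
    by blast
  have "gibbs E \<alpha> \<sigma> * glauber E \<alpha> \<rho> \<sigma> \<tau> =
      cond_weight E \<alpha> v (\<sigma> v) \<sigma> * remote_weight E \<alpha> v \<sigma> / partition_fn E \<alpha> * (\<rho> v * heatbath E \<alpha> \<sigma> v c)"
    unfolding \<tau> glauber_fun_upd[of c \<sigma> v, OF c] gibbs_def weight_eq_cond_weight_mult_remote_weight[of E \<alpha> \<sigma> v] ..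
  also have "\<dots> = cond_weight E \<alpha> v c \<sigma> * remote_weight E \<alpha> v \<sigma> / partition_fn E \<alpha> * (\<rho> v * heatbath E \<alpha> \<sigma> v (\<sigma> v))"
    unfolding heatbath_def by (simp add: algebra_simps)
  also have "\<dots> = gibbs E \<alpha> \<tau> * glauber E \<alpha> \<rho> \<tau> \<sigma>"
    using glauber_fun_upd[of "\<sigma> v" "\<sigma>(v := c)" v E \<alpha> \<rho>] c
    unfolding \<tau> gibbs_def weight_fun_upd by (simp add: heatbath_fun_upd)
  finally show ?thesis .
next
  case False
  have "glauber_off E \<alpha> \<rho> \<sigma> \<tau> = 0"
    using False glauber_off_nonzero_imp_fun_upd by blast
  moreover have "glauber_off E \<alpha> \<rho> \<tau> \<sigma> = 0"
  proof (rule ccontr)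
    assume "glauber_off E \<alpha> \<rho> \<tau> \<sigma> \<noteq> 0"
    then obtain v where v: "\<sigma> v \<noteq> \<tau> v" and \<sigma>: "\<sigma> = \<tau>(v := \<sigma> v)"
      by (rule glauber_off_nonzero_imp_fun_upd)
    have "\<tau> = \<sigma>(v := \<tau> v)"
    proof (rule ext)
      show "\<tau> w = (\<sigma>(v := \<tau> v)) w" for w
        using fun_cong[OF \<sigma>, of w] by (cases "w = v") simp_all
    qed
    moreover have "\<tau> v \<noteq> \<sigma> v"
      using v by simp
    ultimately show False
      using False by blast
  qed
  ultimately show ?thesis
    unfolding glauber_def by auto
qed

lemma path_edge_imp_trans_edge:
  assumes "is_path S x y \<gamma>" "(\<sigma>, \<tau>) \<in> path_edges \<gamma>"
  shows "trans_edge S \<sigma> \<tau>" "\<sigma> \<noteq> \<tau>"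
proof -
  obtain n where "n < length (tl \<gamma>)" "\<gamma> ! n = \<sigma>" "tl \<gamma> ! n = \<tau>"
    using assms(2) unfolding path_edges_def in_set_zip by auto
  then have n: "Suc n < length \<gamma>" "\<gamma> ! n = \<sigma>" "\<gamma> ! Suc n = \<tau>"
    by (auto simp: nth_tl)
  then show "trans_edge S \<sigma> \<tau>"
    using assms(1) unfolding is_path_def by blast
  show "\<sigma> \<noteq> \<tau>"
    using n assms(1) unfolding is_path_def by (auto simp: nth_eq_iff_index_eq)
qed

context
  fixes E :: "('v::finite \<times> 'v) set" and \<alpha> :: "'v \<Rightarrow> 'v \<Rightarrow> 'c::finite \<Rightarrow> 'c \<Rightarrow> real"
  assumes alpha_nonneg: "\<And>v w a b. (v, w) \<in> E \<Longrightarrow> 0 \<le> \<alpha> v w a b"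
begin

lemma cond_weight_nonneg: "0 \<le> cond_weight E \<alpha> v a \<sigma>"
  unfolding cond_weight_def by (rule prod_nonneg) (auto intro: alpha_nonneg)

lemma remote_weight_nonneg: "0 \<le> remote_weight E \<alpha> v \<sigma>"
  unfolding remote_weight_def by (rule prod_nonneg) (auto intro: alpha_nonneg)

lemma heatbath_nonneg: "0 \<le> heatbath E \<alpha> \<sigma> v a"
  unfolding heatbath_def by (intro divide_nonneg_nonneg sum_nonneg cond_weight_nonneg)

lemma glauber_off_nonneg:
  assumes "\<And>v. 0 \<le> \<rho> v"
  shows "0 \<le> glauber_off E \<alpha> \<rho> \<sigma> \<tau>"
proof (cases "glauber_off E \<alpha> \<rho> \<sigma> \<tau> = 0")
  case False
  then obtain v where v: "\<tau> v \<noteq> \<sigma> v" "\<tau> = \<sigma>(v := \<tau> v)"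
    by (rule glauber_off_nonzero_imp_fun_upd)
  then have "glauber_off E \<alpha> \<rho> \<sigma> \<tau> = \<rho> v * heatbath E \<alpha> \<sigma> v (\<tau> v)"
    using glauber_off_fun_upd[of "\<tau> v" \<sigma> v E \<alpha> \<rho>] v(2)[symmetric] by simp
  then show ?thesis
    using assms heatbath_nonneg by simp
qed simp

context
  assumes Z_pos: "0 < partition_fn E \<alpha>"
begin

lemma gibbs_nonneg: "0 \<le> gibbs E \<alpha> \<sigma>"
  unfolding gibbs_def weight_def using Z_pos
  by (intro divide_nonneg_nonneg prod_nonneg) (auto intro: alpha_nonneg)

lemma sum_gibbs_supp: "sum (gibbs E \<alpha>) (supp E \<alpha>) = 1"
proof -
  have "sum (gibbs E \<alpha>) (supp E \<alpha>) = sum (gibbs E \<alpha>) UNIV"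
    using gibbs_nonneg by (intro sum.mono_neutral_left) (auto simp: supp_def order_le_less)
  also have "\<dots> = 1"
    using Z_pos unfolding gibbs_def partition_fn_def by (simp add: sum_divide_distrib[symmetric])
  finally show ?thesis .
qed

lemma fun_upd_in_supp_iff:
  assumes "\<sigma> \<in> supp E \<alpha>"
  shows "\<sigma>(v := a) \<in> supp E \<alpha> \<longleftrightarrow> 0 < cond_weight E \<alpha> v a \<sigma>"
proof -
  have supp_iff: "\<tau> \<in> supp E \<alpha> \<longleftrightarrow> 0 < weight E \<alpha> \<tau>" for \<tau>
    using Z_pos by (simp add: supp_def gibbs_def zero_less_divide_iff)
  have "0 < cond_weight E \<alpha> v (\<sigma> v) \<sigma> * remote_weight E \<alpha> v \<sigma>"
    using assms unfolding supp_iff weight_eq_cond_weight_mult_remote_weight[of E \<alpha> \<sigma> v] .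
  then have "0 < remote_weight E \<alpha> v \<sigma>"
    using remote_weight_nonneg[of v \<sigma>] by (cases "remote_weight E \<alpha> v \<sigma> = 0") auto
  then show ?thesis
    unfolding supp_iff weight_fun_upd using cond_weight_nonneg by (simp add: zero_less_mult_iff)
qed

lemma heatbath_pos:
  assumes "\<sigma> \<in> supp E \<alpha>" "\<sigma>(v := a) \<in> supp E \<alpha>"
  shows "0 < heatbath E \<alpha> \<sigma> v a"
proof -
  have "0 < cond_weight E \<alpha> v (\<sigma> v) \<sigma>"
    using fun_upd_in_supp_iff[OF assms(1), of v "\<sigma> v"] assms(1) by simp
  also have "\<dots> \<le> (\<Sum>a'\<in>UNIV. cond_weight E \<alpha> v a' \<sigma>)"
    by (rule member_le_sum) (auto intro: cond_weight_nonneg)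
  finally show ?thesis
    using fun_upd_in_supp_iff[OF assms(1)] assms(2) unfolding heatbath_def by simp
qed

lemma glauber_off_eq_0_outside_supp:
  assumes "\<sigma> \<in> supp E \<alpha>" "\<tau> \<notin> supp E \<alpha>"
  shows "glauber_off E \<alpha> \<rho> \<sigma> \<tau> = 0"
proof (rule ccontr)
  assume nonzero: "glauber_off E \<alpha> \<rho> \<sigma> \<tau> \<noteq> 0"
  then obtain v where v: "\<tau> v \<noteq> \<sigma> v" "\<tau> = \<sigma>(v := \<tau> v)"
    by (rule glauber_off_nonzero_imp_fun_upd)
  have "cond_weight E \<alpha> v (\<tau> v) \<sigma> = 0"
    using fun_upd_in_supp_iff[OF assms(1), of v "\<tau> v"] v(2) assms(2)
      cond_weight_nonneg[of v "\<tau> v" \<sigma>] by simp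
  then have "glauber_off E \<alpha> \<rho> \<sigma> \<tau> = 0"
    using glauber_off_fun_upd[of "\<tau> v" \<sigma> v E \<alpha> \<rho>] v(1) v(2)[symmetric] by (simp add: heatbath_def)
  with nonzero show False ..
qed

lemma glauber_row_sum:
  assumes "\<sigma> \<in> supp E \<alpha>"
  shows "(\<Sum>\<tau>\<in>supp E \<alpha>. glauber E \<alpha> \<rho> \<sigma> \<tau>) = 1"
proof -
  have "(\<Sum>\<tau>\<in>supp E \<alpha>. glauber E \<alpha> \<rho> \<sigma> \<tau>) =
      glauber E \<alpha> \<rho> \<sigma> \<sigma> + (\<Sum>\<tau>\<in>supp E \<alpha> - {\<sigma>}. glauber_off E \<alpha> \<rho> \<sigma> \<tau>)"
    using assms by (simp add: sum.remove glauber_def)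
  also have "(\<Sum>\<tau>\<in>supp E \<alpha> - {\<sigma>}. glauber_off E \<alpha> \<rho> \<sigma> \<tau>) = (\<Sum>\<tau>\<in>UNIV - {\<sigma>}. glauber_off E \<alpha> \<rho> \<sigma> \<tau>)"
    using glauber_off_eq_0_outside_supp[OF assms] by (intro sum.mono_neutral_left) auto
  finally show ?thesis
    by (simp add: glauber_def)
qed

lemma reversible_kernel_glauber: "reversible_kernel (supp E \<alpha>) (gibbs E \<alpha>) (glauber E \<alpha> \<rho>)"
proof
  show "0 < gibbs E \<alpha> \<sigma>" if "\<sigma> \<in> supp E \<alpha>" for \<sigma>
    using that by (simp add: supp_def)
qed (simp_all add: glauber_detailed_balance glauber_row_sum)

lemma congestion_le_of_flow_ratio_le:
  assumes "\<sigma> \<in> supp E \<alpha>" "\<sigma>(v := c) \<in> supp E \<alpha>" "c \<noteq> \<sigma> v" "0 < \<rho> v"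
    and "congestion E \<alpha> \<Gamma> (\<sigma>, \<sigma>(v := c)) / edge_flow E \<alpha> (glauber E \<alpha> \<rho>) (\<sigma>, \<sigma>(v := c)) \<le> B"
  shows "congestion E \<alpha> \<Gamma> (\<sigma>, \<sigma>(v := c)) \<le> B * \<rho> v * (gibbs E \<alpha> \<sigma> * heatbath E \<alpha> \<sigma> v c)"
proof -
  have flow: "edge_flow E \<alpha> (glauber E \<alpha> \<rho>) (\<sigma>, \<sigma>(v := c)) = \<rho> v * (gibbs E \<alpha> \<sigma> * heatbath E \<alpha> \<sigma> v c)"
    using assms(3) by (rule edge_flow_glauber_fun_upd)
  have "0 < \<rho> v * (gibbs E \<alpha> \<sigma> * heatbath E \<alpha> \<sigma> v c)"
    using assms(1-4) heatbath_pos by (simp add: supp_def)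
  then have "congestion E \<alpha> \<Gamma> (\<sigma>, \<sigma>(v := c)) \<le> B * (\<rho> v * (gibbs E \<alpha> \<sigma> * heatbath E \<alpha> \<sigma> v c))"
    using assms(5) unfolding flow by (simp only: pos_divide_le_eq)
  then show ?thesis
    by (simp only: ac_simps)
qed

lemma glauber_tau2_le:
  fixes \<Gamma> :: "('v \<Rightarrow> 'c) \<Rightarrow> ('v \<Rightarrow> 'c) \<Rightarrow> ('v \<Rightarrow> 'c) list"
  assumes S_card: "card (supp E \<alpha>) \<ge> 2"
    and paths: "\<And>\<sigma> \<sigma>'. \<sigma> \<in> supp E \<alpha> \<Longrightarrow> \<sigma>' \<in> supp E \<alpha> \<Longrightarrow> is_path (supp E \<alpha>) \<sigma> \<sigma>' (\<Gamma> \<sigma> \<sigma>')"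
    and rho_nonneg: "\<And>v. 0 \<le> \<rho> v" and C_pos: "0 < C"
    and local_congestion: "\<And>\<sigma> v c. \<sigma> \<in> supp E \<alpha> \<Longrightarrow> \<sigma>(v := c) \<in> supp E \<alpha> \<Longrightarrow> c \<noteq> \<sigma> v \<Longrightarrow>
        congestion E \<alpha> \<Gamma> (\<sigma>, \<sigma>(v := c)) \<le> b v * (gibbs E \<alpha> \<sigma> * heatbath E \<alpha> \<sigma> v c)"
    and rates: "\<And>v. b v \<le> C * \<rho> v"
  shows "lambda2 (supp E \<alpha>) (glauber E \<alpha> \<rho>) < 1 \<and> tau2 (supp E \<alpha>) (glauber E \<alpha> \<rho>) \<le> C"
proof -
  let ?S = "supp E \<alpha>"
  interpret reversible_kernel ?S "gibbs E \<alpha>" "glauber E \<alpha> \<rho>"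
    by (rule reversible_kernel_glauber)
  have "poincare_inequality ?S (gibbs E \<alpha>) (glauber E \<alpha> \<rho>) C"
  proof (rule poincare_inequality_of_canonical_paths)
    show "0 \<le> glauber E \<alpha> \<rho> \<sigma> \<tau>" if "\<sigma> \<noteq> \<tau>" for \<sigma> \<tau>
      using that glauber_off_nonneg[OF rho_nonneg] by (simp add: glauber_def)
    show "list_path ?S \<sigma> \<sigma>' (\<Gamma> \<sigma> \<sigma>')" if "\<sigma> \<in> ?S" "\<sigma>' \<in> ?S" for \<sigma> \<sigma>'
      using paths[OF that] unfolding is_path_def list_path_def by blast
    fix \<sigma> \<sigma>' \<sigma>\<^sub>1 \<sigma>\<^sub>2 assume "\<sigma> \<in> ?S" "\<sigma>' \<in> ?S" "(\<sigma>\<^sub>1, \<sigma>\<^sub>2) \<in> path_edges (\<Gamma> \<sigma> \<sigma>')"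
    then have "trans_edge ?S \<sigma>\<^sub>1 \<sigma>\<^sub>2" "\<sigma>\<^sub>1 \<noteq> \<sigma>\<^sub>2"
      using path_edge_imp_trans_edge paths by blast+
    then obtain v where edge: "\<sigma>\<^sub>1 \<in> ?S" "\<sigma>\<^sub>1(v := \<sigma>\<^sub>2 v) \<in> ?S" "\<sigma>\<^sub>2 v \<noteq> \<sigma>\<^sub>1 v" "\<sigma>\<^sub>2 = \<sigma>\<^sub>1(v := \<sigma>\<^sub>2 v)"
      unfolding trans_edge_def by (metis fun_upd_triv)
    have "path_congestion ?S (gibbs E \<alpha>) \<Gamma> (\<sigma>\<^sub>1, \<sigma>\<^sub>2) = congestion E \<alpha> \<Gamma> (\<sigma>\<^sub>1, \<sigma>\<^sub>1(v := \<sigma>\<^sub>2 v))"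
      unfolding congestion_def path_congestion_def using edge(4) by simp
    also have "\<dots> \<le> b v * (gibbs E \<alpha> \<sigma>\<^sub>1 * heatbath E \<alpha> \<sigma>\<^sub>1 v (\<sigma>\<^sub>2 v))"
      using local_congestion edge(1-3) by blast
    also have "\<dots> \<le> C * \<rho> v * (gibbs E \<alpha> \<sigma>\<^sub>1 * heatbath E \<alpha> \<sigma>\<^sub>1 v (\<sigma>\<^sub>2 v))"
      using rates gibbs_nonneg heatbath_nonneg by (intro mult_right_mono) auto
    also have "\<dots> = C * (gibbs E \<alpha> \<sigma>\<^sub>1 * glauber E \<alpha> \<rho> \<sigma>\<^sub>1 \<sigma>\<^sub>2)"
      by (subst edge(4)) (simp add: glauber_fun_upd[of "\<sigma>\<^sub>2 v" \<sigma>\<^sub>1 v, OF edge(3)])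
    finally show "path_congestion ?S (gibbs E \<alpha>) \<Gamma> (\<sigma>\<^sub>1, \<sigma>\<^sub>2) \<le> C * (gibbs E \<alpha> \<sigma>\<^sub>1 * glauber E \<alpha> \<rho> \<sigma>\<^sub>1 \<sigma>\<^sub>2)" .
  qed (use C_pos gibbs_nonneg sum_gibbs_supp in auto)
  then show ?thesis
    using tau2_le_of_poincare C_pos S_card by blast
qed

lemma glauber_tau2_le_of_uniform_ratio_bound:
  fixes \<Gamma> :: "('v \<Rightarrow> 'c) \<Rightarrow> ('v \<Rightarrow> 'c) \<Rightarrow> ('v \<Rightarrow> 'c) list"
  assumes S_card: "card (supp E \<alpha>) \<ge> 2"
    and paths: "\<And>\<sigma> \<sigma>'. \<sigma> \<in> supp E \<alpha> \<Longrightarrow> \<sigma>' \<in> supp E \<alpha> \<Longrightarrow> is_path (supp E \<alpha>) \<sigma> \<sigma>' (\<Gamma> \<sigma> \<sigma>')"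
    and B_bound: "\<And>\<sigma> v a. \<sigma> \<in> supp E \<alpha> \<Longrightarrow> \<sigma>(v := a) \<in> supp E \<alpha> \<Longrightarrow> \<sigma>(v := a) \<noteq> \<sigma> \<Longrightarrow>
        congestion E \<alpha> \<Gamma> (\<sigma>, \<sigma>(v := a)) / edge_flow E \<alpha> (glauber E \<alpha> uniform_rate) (\<sigma>, \<sigma>(v := a)) \<le> B v"
    and rho_nonneg: "\<And>v. 0 \<le> \<rho> v" and C_pos: "0 < C"
    and rates: "\<And>v. B v \<le> C * real CARD('v) * \<rho> v"
  shows "lambda2 (supp E \<alpha>) (glauber E \<alpha> \<rho>) < 1 \<and> tau2 (supp E \<alpha>) (glauber E \<alpha> \<rho>) \<le> C"
proof (rule glauber_tau2_le[where b = "\<lambda>v. B v * uniform_rate v", OF S_card paths rho_nonneg C_pos])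
  show "congestion E \<alpha> \<Gamma> (\<sigma>, \<sigma>(v := c)) \<le> B v * uniform_rate v * (gibbs E \<alpha> \<sigma> * heatbath E \<alpha> \<sigma> v c)"
    if "\<sigma> \<in> supp E \<alpha>" "\<sigma>(v := c) \<in> supp E \<alpha>" "c \<noteq> \<sigma> v" for \<sigma> v c
    using that by (intro congestion_le_of_flow_ratio_le[OF that] B_bound) (auto simp: uniform_rate_def fun_upd_idem_iff)
  show "B v * uniform_rate v \<le> C * \<rho> v" for v
    using rates[of v] by (simp add: uniform_rate_def field_simps)
qed

end

end

context
  fixes E :: "('v::finite \<times> 'v) set"
    and \<alpha> :: "'v \<Rightarrow> 'v \<Rightarrow> 'c::finite \<Rightarrow> 'c \<Rightarrow> real"
    and \<Gamma> :: "('v \<Rightarrow> 'c) \<Rightarrow> ('v \<Rightarrow> 'c) \<Rightarrow> ('v \<Rightarrow> 'c) list"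
    and B :: "'v \<Rightarrow> real"
  assumes alpha_nonneg: "\<And>v w a b. (v, w) \<in> E \<Longrightarrow> \<alpha> v w a b \<ge> 0"
    and Z_pos: "partition_fn E \<alpha> > 0"
    and S_card: "card (supp E \<alpha>) \<ge> 2"
    and paths: "\<And>\<sigma> \<sigma>'. \<sigma> \<in> supp E \<alpha> \<Longrightarrow> \<sigma>' \<in> supp E \<alpha> \<Longrightarrow> is_path (supp E \<alpha>) \<sigma> \<sigma>' (\<Gamma> \<sigma> \<sigma>')"
    and B_pos: "\<And>v. B v > 0"
    and B_bound: "\<And>\<sigma> v a. \<sigma> \<in> supp E \<alpha> \<Longrightarrow> \<sigma>(v := a) \<in> supp E \<alpha> \<Longrightarrow> \<sigma>(v := a) \<noteq> \<sigma> \<Longrightarrow>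
        congestion E \<alpha> \<Gamma> (\<sigma>, \<sigma>(v := a)) / edge_flow E \<alpha> (glauber E \<alpha> uniform_rate) (\<sigma>, \<sigma>(v := a)) \<le> B v"
begin

corollary glauber_tau2_le_uniform_rate:
  "lambda2 (supp E \<alpha>) (glauber E \<alpha> uniform_rate) < 1 \<and>
   tau2 (supp E \<alpha>) (glauber E \<alpha> uniform_rate) \<le> Max (range B)"
  using B_pos
  by (intro glauber_tau2_le_of_uniform_ratio_bound[OF alpha_nonneg Z_pos S_card paths B_bound])
    (auto simp: uniform_rate_def Max_ge_iff Max_gr_iff)

corollary glauber_tau2_le_proportional_rate:
  "lambda2 (supp E \<alpha>) (glauber E \<alpha> (\<lambda>v. B v / (\<Sum>u\<in>UNIV. B u))) < 1 \<and>
   tau2 (supp E \<alpha>) (glauber E \<alpha> (\<lambda>v. B v / (\<Sum>u\<in>UNIV. B u))) \<le> (\<Sum>v\<in>UNIV. B v) / real CARD('v)"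
proof -
  have "0 < (\<Sum>u\<in>UNIV. B u)"
    using B_pos by (simp add: sum_pos)
  then show ?thesis
    using B_pos
    by (intro glauber_tau2_le_of_uniform_ratio_bound[OF alpha_nonneg Z_pos S_card paths B_bound])
      (auto simp: less_imp_le)
qed

end

theorem proposition4:
  fixes E :: "('v::finite \<times> 'v) set"
    and \<alpha> :: "'v \<Rightarrow> 'v \<Rightarrow> 'c::finite \<Rightarrow> 'c \<Rightarrow> real"
    and \<Gamma> :: "('v \<Rightarrow> 'c) \<Rightarrow> ('v \<Rightarrow> 'c) \<Rightarrow> ('v \<Rightarrow> 'c) list"
    and B :: "'v \<Rightarrow> real"
  assumes alpha_nonneg: "\<And>v w a b. (v, w) \<in> E \<Longrightarrow> \<alpha> v w a b \<ge> 0"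
    and Z_pos: "partition_fn E \<alpha> > 0"
    and S_card: "card (supp E \<alpha>) \<ge> 2"
    and paths: "\<And>\<sigma> \<sigma>'. \<sigma> \<in> supp E \<alpha> \<Longrightarrow> \<sigma>' \<in> supp E \<alpha> \<Longrightarrow> is_path (supp E \<alpha>) \<sigma> \<sigma>' (\<Gamma> \<sigma> \<sigma>')"
    and B_pos: "\<And>v. B v > 0"
    and B_bound: "\<And>\<sigma> v a. \<sigma> \<in> supp E \<alpha> \<Longrightarrow> \<sigma>(v := a) \<in> supp E \<alpha> \<Longrightarrow> \<sigma>(v := a) \<noteq> \<sigma> \<Longrightarrow>
        congestion E \<alpha> \<Gamma> (\<sigma>, \<sigma>(v := a)) / edge_flow E \<alpha> (glauber E \<alpha> uniform_rate) (\<sigma>, \<sigma>(v := a)) \<le> B v"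
  shows "lambda2 (supp E \<alpha>) (glauber E \<alpha> uniform_rate) < 1 \<and>
         tau2 (supp E \<alpha>) (glauber E \<alpha> uniform_rate) \<le> Max (range B) \<and>
         lambda2 (supp E \<alpha>) (glauber E \<alpha> (\<lambda>v. B v / (\<Sum>u\<in>UNIV. B u))) < 1 \<and>
         tau2 (supp E \<alpha>) (glauber E \<alpha> (\<lambda>v. B v / (\<Sum>u\<in>UNIV. B u))) \<le> (\<Sum>v\<in>UNIV. B v) / real (card (UNIV :: 'v set))"
  using glauber_tau2_le_uniform_rate[OF assms] glauber_tau2_le_proportional_rate[OF assms] by blast

end
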